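(* Let $p$ be an odd prime and let $R$ be a nearring with identity whose additive group is $G_1=\langle a\rangle+\langle b\rangle+\langle c\rangle$ with $ap=bp=cp=0$, $a+b=b+a+c$, $a+c=c+a$, $b+c=c+b$, and suppose $a$ is the identity element of $R$. Write every element as $x=ax_1+bx_2+cx_3$ ($0\le x_i<p$), and define maps $\alpha,\beta,\gamma\colon R\to\mathbb Z_p$ by $xb=a\alpha(x)+b\beta(x)+c\gamma(x)$. Then for $x=ax_1+bx_2+cx_3$, $y=ay_1+by_2+cy_3\in R$, $$xy=a(x_1y_1+\alpha(x)y_2)+b(x_2y_1+\beta(x)y_2)+c\Big(-x_1x_2\tbinom{y_1}{2}-\alpha(x)\beta(x)\tbinom{y_2}{2}-x_2\alpha(x)y_1y_2+x_3y_1+\gamma(x)y_2+x_1\beta(x)y_3-x_2\alpha(x)y_3\Big).$$ Moreover: (0) $\alpha(0)\equiv\beta(0)\equiv\gamma(0)\equiv 0\pmod p$ if and only if $R$ is zero-symmetric; (1) $\alpha(xy)\equiv x_1\alpha(y)+\alpha(x)\beta(y)\pmod p$; (2) $\beta(xy)\equiv x_2\alpha(y)+\beta(x)\beta(y)\pmod p$; (3) $\gamma(xy)\equiv -x_1x_2\binom{\alpha(y)}{2}-\alpha(x)\beta(x)\binom{\beta(y)}{2}-x_2\alpha(x)\alpha(y)\beta(y)+x_3\alpha(y)+\gamma(x)\beta(y)+x_1\beta(x)\gamma(y)-x_2\alpha(x)\gamma(y)\pmod p$.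
   Context: A (left) nearring is a set $R$ with operations $+,\cdot$ such that $(R,+)$ is a group with neutral element $0$, $(R,\cdot)$ is a semigroup, and $x(y+z)=xy+xz$ for all $x,y,z$; it has an identity if $(R,\cdot)$ is a monoid. It is zero-symmetric if $0\cdot x=0$ for all $x\in R$. The group is written additively; $gk$ denotes $g$ added to itself $k$ times. Coefficients are read modulo $p$. *)

theory Defs
  imports "HOL-Computational_Algebra.Primes"
begin

text \<open>The additive group of the nearring is written additively and need not be
commutative (class group_add).  g k = g added to itself k times.\<close>
definition nsm :: "'a::group_add \<Rightarrow> nat \<Rightarrow> 'a" where
  "nsm g k = (((+) g) ^^ k) 0"

text \<open>Integer multiples (coefficients are read modulo p; since the generators have
additive order p this only depends on k mod p).\<close>
definition zsm :: "'a::group_add \<Rightarrow> int \<Rightarrow> 'a" where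
  "zsm g k = (if 0 \<le> k then nsm g (nat k) else - nsm g (nat (- k)))"

definition comb :: "'a::group_add \<Rightarrow> 'a \<Rightarrow> 'a \<Rightarrow> nat \<Rightarrow> nat \<Rightarrow> nat \<Rightarrow> 'a" where
  "comb a b c x1 x2 x3 = nsm a x1 + nsm b x2 + nsm c x3"

definition is_coords :: "'a::group_add \<Rightarrow> 'a \<Rightarrow> 'a \<Rightarrow> nat \<Rightarrow> 'a \<Rightarrow> nat \<times> nat \<times> nat \<Rightarrow> bool" where
  "is_coords a b c p x t = (case t of (x1, x2, x3) \<Rightarrow>
      x1 < p \<and> x2 < p \<and> x3 < p \<and> x = comb a b c x1 x2 x3)"

definition coords :: "'a::group_add \<Rightarrow> 'a \<Rightarrow> 'a \<Rightarrow> nat \<Rightarrow> 'a \<Rightarrow> nat \<times> nat \<times> nat" where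
  "coords a b c p x = (THE t. is_coords a b c p x t)"

definition alpha :: "'a::{group_add,times} \<Rightarrow> 'a \<Rightarrow> 'a \<Rightarrow> nat \<Rightarrow> 'a \<Rightarrow> nat" where
  "alpha a b c p x = fst (coords a b c p (x * b))"
definition beta :: "'a::{group_add,times} \<Rightarrow> 'a \<Rightarrow> 'a \<Rightarrow> nat \<Rightarrow> 'a \<Rightarrow> nat" where
  "beta a b c p x = fst (snd (coords a b c p (x * b)))"
definition gamma :: "'a::{group_add,times} \<Rightarrow> 'a \<Rightarrow> 'a \<Rightarrow> nat \<Rightarrow> 'a \<Rightarrow> nat" where
  "gamma a b c p x = snd (snd (coords a b c p (x * b)))"

end

theory Submission
  imports Defs
begin

text \<open>
  Writing \<open>(u, v, w)\<close> for \<open>a u + b v + c w\<close>, the relations make \<open>(R, +)\<close> the Heisenberg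
  group mod \<open>p\<close>: \<open>(u, v, w) + (u', v', w') = (u + u', v + v', w + w' - v u')\<close>, so
  \<open>(u, v, w) n = (n u, n v, n w - uv \<open>n choose 2\<close>)\<close>.
  By left distributivity, left multiplication by \<open>x\<close> is an endomorphism of \<open>(R, +)\<close>. It
  sends \<open>a = 1\<close> to \<open>x\<close>, \<open>b\<close> to \<open>(\<alpha>(x), \<beta>(x), \<gamma>(x))\<close>, and hence the commutator \<open>c\<close> of
  \<open>a\<close> and \<open>b\<close> to the commutator of \<open>x\<close> and \<open>xb\<close>, which is \<open>(0, 0, x\<^sub>1\<beta>(x) - x\<^sub>2\<alpha>(x))\<close>.
  Thus \<open>xy = x y\<^sub>1 + (xb) y\<^sub>2 + (xc) y\<^sub>3\<close>, and evaluating these multiples gives the product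
  formula. The formulas for \<open>\<alpha>(xy), \<beta>(xy), \<gamma>(xy)\<close> are the coordinates of
  \<open>(xy)b = x(yb)\<close>, and \<open>R\<close> is zero-symmetric iff \<open>0b = 0\<close>.
\<close>

lemma nsm_0 [simp]: "nsm g 0 = 0"
  by (simp add: nsm_def)

lemma nsm_Suc: "nsm g (Suc n) = g + nsm g n"
  by (simp add: nsm_def)

lemma nsm_add: "nsm g (m + n) = nsm g m + nsm g n"
  by (induction m) (simp_all add: nsm_Suc add.assoc)

lemma nsm_add_commute: "nsm g m + nsm g n = nsm g n + nsm g m"
  by (metis nsm_add add.commute)

lemma nsm_commute:
  assumes "g + h = h + g"
  shows "nsm g n + h = h + nsm g n"
proof (induction n)
  case (Suc n)
  have "nsm g (Suc n) + h = g + (nsm g n + h)"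
    by (simp add: nsm_Suc add.assoc)
  also have "\<dots> = g + h + nsm g n"
    by (simp add: Suc.IH add.assoc)
  also have "\<dots> = h + nsm g (Suc n)"
    by (simp add: assms nsm_Suc add.assoc)
  finally show ?case .
qed simp

lemma nsm_mult_eq_0: "nsm g p = 0 \<Longrightarrow> nsm g (q * p) = 0"
  by (induction q) (simp_all add: nsm_add)

lemma nsm_mod:
  assumes "nsm g p = 0"
  shows "nsm g n = nsm g (n mod p)"
  by (metis assms add_0 div_mult_mod_eq nsm_add nsm_mult_eq_0)

lemma zsm_of_nat: "zsm g (int n) = nsm g n"
  by (simp add: zsm_def)

lemma zsm_0 [simp]: "zsm g 0 = 0"
  by (simp add: zsm_def)

context
  fixes g :: "'a::group_add" and p :: nat
  assumes p_pos: "p > 0" and order: "nsm g p = 0"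
begin

lemma zsm_eq_nsm_mod: "zsm g k = nsm g (nat (k mod int p))"
proof (cases "0 \<le> k")
  case True
  then show ?thesis
    using nsm_mod[OF order] by (simp add: zsm_def nat_mod_distrib)
next
  case False
  have "int ((nat (k mod int p) + nat (- k)) mod p) = (k mod int p - k) mod int p"
    using False p_pos by (simp add: zmod_int)
  then have "(nat (k mod int p) + nat (- k)) mod p = 0"
    by (simp add: mod_diff_left_eq)
  then have "nsm g (nat (- k)) + nsm g (nat (k mod int p)) = 0"
    using nsm_mod[OF order, of "nat (k mod int p) + nat (- k)"]
    by (simp add: nsm_add nsm_add_commute)
  then have "- nsm g (nat (- k)) = nsm g (nat (k mod int p))"
    by (rule minus_unique)
  then show ?thesis
    using False by (simp add: zsm_def)
qed

lemma zsm_cong: "k mod int p = k' mod int p \<Longrightarrow> zsm g k = zsm g k'"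
  by (simp add: zsm_eq_nsm_mod)

lemma zsm_add: "zsm g (m + n) = zsm g m + zsm g n"
proof -
  have "int ((nat (m mod int p) + nat (n mod int p)) mod p) = (m + n) mod int p"
    using p_pos by (simp add: zmod_int mod_add_eq)
  then have "nat ((m + n) mod int p) = (nat (m mod int p) + nat (n mod int p)) mod p"
    by linarith
  then show ?thesis
    using nsm_mod[OF order, of "nat (m mod int p) + nat (n mod int p)"]
    by (simp add: zsm_eq_nsm_mod nsm_add)
qed

lemma zsm_uminus: "zsm g (- k) = - zsm g k"
  by (metis minus_unique add.right_inverse zsm_add zsm_0)

lemma zsm_commute: "g + h = h + g \<Longrightarrow> zsm g k + h = h + zsm g k"
  by (simp add: zsm_eq_nsm_mod nsm_commute)

end

section \<open>The Heisenberg group mod \<open>p\<close> in coordinates\<close>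

locale heisenberg_mod_p =
  fixes a b c :: "'a::group_add" and p :: nat
  assumes p_pos: "p > 0"
    and order_a: "nsm a p = 0" and order_b: "nsm b p = 0" and order_c: "nsm c p = 0"
    and a_b_commutator: "a + b = b + a + c"
    and a_c_commute: "a + c = c + a" and b_c_commute: "b + c = c + b"
    and unique_coords: "\<exists>!t. is_coords a b c p x t"
begin

definition combz :: "int \<Rightarrow> int \<Rightarrow> int \<Rightarrow> 'a" where
  "combz u v w = zsm a u + zsm b v + zsm c w"

lemmas zsm_add_a = zsm_add[OF p_pos order_a]
  and zsm_add_b = zsm_add[OF p_pos order_b]
  and zsm_add_c = zsm_add[OF p_pos order_c]

lemma comb_eq_combz: "comb a b c x1 x2 x3 = combz (int x1) (int x2) (int x3)"
  by (simp add: comb_def combz_def zsm_of_nat)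

lemma combz_0 [simp]: "combz 0 0 0 = 0"
  by (simp add: combz_def)

lemma combz_cong:
  "u mod int p = u' mod int p \<Longrightarrow> v mod int p = v' mod int p \<Longrightarrow> w mod int p = w' mod int p
    \<Longrightarrow> combz u v w = combz u' v' w'"
  using zsm_cong[OF p_pos order_a, of u u'] zsm_cong[OF p_pos order_b, of v v']
    zsm_cong[OF p_pos order_c, of w w']
  by (simp add: combz_def)

lemma is_coords_coords: "is_coords a b c p x (coords a b c p x)"
  unfolding coords_def by (rule theI') (rule unique_coords)

lemma obtain_comb:
  obtains x1 x2 x3 where "x1 < p" "x2 < p" "x3 < p" "x = comb a b c x1 x2 x3"
  using is_coords_coords[of x] by (cases "coords a b c p x") (auto simp: is_coords_def)

lemma coords_combz:
  "coords a b c p (combz u v w) = (nat (u mod int p), nat (v mod int p), nat (w mod int p))"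
proof -
  have "is_coords a b c p (combz u v w) (nat (u mod int p), nat (v mod int p), nat (w mod int p))"
    using p_pos by (auto simp: is_coords_def comb_eq_combz nat_less_iff intro!: combz_cong)
  then show ?thesis
    unfolding coords_def by (rule the1_equality[OF unique_coords])
qed

lemma c_central: "c + x = x + c"
proof -
  obtain x1 x2 x3 where x: "x = nsm a x1 + nsm b x2 + nsm c x3"
    using obtain_comb[of x] unfolding comb_def by metis
  have "c + nsm a x1 = nsm a x1 + c" "c + nsm b x2 = nsm b x2 + c" "c + nsm c x3 = nsm c x3 + c"
    using nsm_commute[OF a_c_commute] nsm_commute[OF b_c_commute] nsm_commute[of c c] by simp_all
  then show ?thesis
    unfolding x by (metis add.assoc)
qed

lemma zsm_c_central: "zsm c k + x = x + zsm c k"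
  by (rule zsm_commute[OF p_pos order_c c_central])

lemma nsm_c_central: "nsm c k + x = x + nsm c k"
  by (rule nsm_commute[OF c_central])

lemma b_nsm_a_commutator: "b + nsm a u + nsm c u = nsm a u + b"
proof (induction u)
  case (Suc u)
  have "b + nsm a (Suc u) + nsm c (Suc u) = b + a + (nsm a u + c) + nsm c u"
    by (simp add: nsm_Suc add.assoc)
  also have "\<dots> = b + a + c + nsm a u + nsm c u"
    by (simp add: c_central[of "nsm a u"] add.assoc)
  also have "\<dots> = a + (b + nsm a u + nsm c u)"
    by (metis a_b_commutator add.assoc)
  also have "\<dots> = nsm a (Suc u) + b"
    by (metis Suc.IH nsm_Suc add.assoc)
  finally show ?case .
qed simp

lemma nsm_b_nsm_a_commutator: "nsm b v + nsm a u + nsm c (u * v) = nsm a u + nsm b v"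
proof (induction v)
  case (Suc v)
  have "nsm b (Suc v) + nsm a u + nsm c (u * Suc v)
      = b + (nsm b v + nsm a u + nsm c (u * v)) + nsm c u"
    by (simp add: nsm_Suc nsm_add add.assoc nsm_c_central[of u "nsm c (u * v)"])
  also have "\<dots> = b + nsm a u + (nsm b v + nsm c u)"
    by (metis Suc.IH add.assoc)
  also have "\<dots> = (b + nsm a u + nsm c u) + nsm b v"
    by (simp add: add.assoc nsm_c_central[of u "nsm b v"])
  also have "\<dots> = nsm a u + nsm b (Suc v)"
    by (metis b_nsm_a_commutator nsm_Suc add.assoc)
  finally show ?case .
qed simp

lemma zsm_b_zsm_a_commutator: "zsm b v + zsm a u = zsm a u + zsm b v + zsm c (- (u * v))"
proof -
  define U where "U = nat (u mod int p)"
  define V where "V = nat (v mod int p)"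
  have "int (U * V) mod int p = (u * v) mod int p"
    using p_pos by (simp add: U_def V_def mod_mult_eq)
  then have zsm_c_uv: "zsm c (u * v) = nsm c (U * V)"
    using zsm_cong[OF p_pos order_c, of "u * v" "int (U * V)"] zsm_of_nat[of c "U * V"] by simp
  have "zsm b v + zsm a u + zsm c (u * v) = zsm a u + zsm b v"
    using nsm_b_nsm_a_commutator[of V U]
    by (simp add: zsm_eq_nsm_mod[OF p_pos order_a] zsm_eq_nsm_mod[OF p_pos order_b]
        zsm_c_uv U_def V_def mult.commute)
  then have "zsm b v + zsm a u = zsm a u + zsm b v - zsm c (u * v)"
    by (simp add: eq_diff_eq)
  then show ?thesis
    by (simp only: zsm_uminus[OF p_pos order_c] diff_conv_add_uminus)
qed

lemma combz_add: "combz u v w + combz u' v' w' = combz (u + u') (v + v') (w + w' - v * u')"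
proof -
  have "combz u v w + combz u' v' w' = zsm a u + zsm b v + (zsm c w + combz u' v' w')"
    by (simp add: combz_def add.assoc)
  also have "\<dots> = zsm a u + (zsm b v + zsm a u') + zsm b v' + zsm c (w' + w)"
    unfolding zsm_c_central[of w] by (simp add: combz_def zsm_add_c add.assoc)
  also have "\<dots> = zsm a u + zsm a u' + zsm b v + zsm b v' + (zsm c (- (u' * v)) + zsm c (w' + w))"
    unfolding zsm_b_zsm_a_commutator
    by (simp add: add.assoc zsm_c_central[of "- (u' * v)" "zsm b v'"])
  also have "\<dots> = combz (u + u') (v + v') (- (u' * v) + (w' + w))"
    by (simp only: combz_def zsm_add_a zsm_add_b zsm_add_c add.assoc)
  finally show ?thesis
    by (simp add: algebra_simps)
qed

lemma uminus_combz_add_combz: "- combz u v w + combz u v w' = combz 0 0 (w' - w)"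
proof -
  have "combz u v w' = combz u v w + combz 0 0 (w' - w)"
    by (simp add: combz_add)
  then show ?thesis
    by simp
qed

lemma nsm_combz:
  "nsm (combz u v w) n = combz (int n * u) (int n * v) (int n * w - u * v * int (n choose 2))"
proof (induction n)
  case (Suc n)
  have "nsm (combz u v w) (Suc n)
      = combz u v w + combz (int n * u) (int n * v) (int n * w - u * v * int (n choose 2))"
    by (simp add: nsm_Suc Suc.IH)
  also have "\<dots> = combz (int (Suc n) * u) (int (Suc n) * v)
      (int (Suc n) * w - u * v * int (Suc n choose 2))"
    by (simp add: combz_add numeral_2_eq_2 algebra_simps)
  finally show ?case .
qed (simp add: numeral_2_eq_2)

end

locale heisenberg_nearring =
  heisenberg_mod_p a b c p for a b c :: "'r::{group_add, monoid_mult}" and p +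
  assumes left_distrib: "\<And>x y z :: 'r. x * (y + z) = x * y + x * z"
    and a_one: "a = 1"
begin

abbreviation \<alpha> :: "'r \<Rightarrow> nat" where "\<alpha> \<equiv> alpha a b c p"
abbreviation \<beta> :: "'r \<Rightarrow> nat" where "\<beta> \<equiv> beta a b c p"
abbreviation \<gamma> :: "'r \<Rightarrow> nat" where "\<gamma> \<equiv> gamma a b c p"

lemma mult_zero_right: "x * 0 = (0 :: 'r)"
proof -
  have "x * 0 + x * 0 = x * 0 + 0"
    by (simp flip: left_distrib)
  then show ?thesis
    by (rule add_left_cancel[THEN iffD1])
qed

lemma mult_nsm: "x * nsm g n = nsm (x * g :: 'r) n"
  by (induction n) (simp_all add: mult_zero_right nsm_Suc left_distrib)

lemma mult_uminus: "x * (- y) = - (x * y :: 'r)"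
proof -
  have "x * (- y) + x * y = 0"
    by (simp flip: left_distrib add: mult_zero_right)
  then show ?thesis
    by (simp add: eq_neg_iff_add_eq_0)
qed

lemma mult_b: "(x :: 'r) * b = comb a b c (\<alpha> x) (\<beta> x) (\<gamma> x)"
  using is_coords_coords[of "x * b"]
  by (cases "coords a b c p (x * b)") (simp add: is_coords_def alpha_def beta_def gamma_def)

lemma mult_c:
  assumes x: "x = combz X1 X2 X3" and xb: "x * b = combz A B G"
  shows "x * c = combz 0 0 (X1 * B - X2 * A)"
proof -
  have "x * c = x * (- (b + a) + (a + b))"
    by (simp only: a_b_commutator minus_add_cancel)
  also have "\<dots> = - (x * b + x) + (x + x * b)"
    by (simp only: left_distrib mult_uminus a_one mult_1_right)
  also have "x * b + x = combz (X1 + A) (X2 + B) (X3 + G - B * X1)"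
    unfolding xb unfolding x combz_add by (simp add: algebra_simps)
  also have "x + x * b = combz (X1 + A) (X2 + B) (X3 + G - X2 * A)"
    unfolding xb unfolding x combz_add ..
  finally show ?thesis
    by (simp add: uminus_combz_add_combz algebra_simps)
qed

lemma mult_comb:
  assumes x: "x = combz X1 X2 X3"
  shows "x * comb a b c y1 y2 y3 =
    combz (X1 * int y1 + int (\<alpha> x) * int y2) (X2 * int y1 + int (\<beta> x) * int y2)
      (- X1 * X2 * int (y1 choose 2) - int (\<alpha> x) * int (\<beta> x) * int (y2 choose 2)
       - X2 * int (\<alpha> x) * int y1 * int y2 + X3 * int y1 + int (\<gamma> x) * int y2
       + X1 * int (\<beta> x) * int y3 - X2 * int (\<alpha> x) * int y3)"
proof -
  define A B G where "A = int (\<alpha> x)" and "B = int (\<beta> x)" and "G = int (\<gamma> x)"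
  have xb: "x * b = combz A B G"
    unfolding A_def B_def G_def mult_b comb_eq_combz ..
  have "x * comb a b c y1 y2 y3 = nsm x y1 + nsm (x * b) y2 + nsm (x * c) y3"
    by (simp only: comb_def left_distrib mult_nsm a_one mult_1_right)
  also have "\<dots> = combz (int y1 * X1) (int y1 * X2) (int y1 * X3 - X1 * X2 * int (y1 choose 2))
     + combz (int y2 * A) (int y2 * B) (int y2 * G - A * B * int (y2 choose 2))
     + combz 0 0 (int y3 * (X1 * B - X2 * A))"
    unfolding mult_c[OF x xb] xb unfolding x nsm_combz by simp
  finally show ?thesis
    unfolding combz_add A_def B_def G_def by (simp add: algebra_simps)
qed

lemma mult_mult_b:
  assumes x: "x = combz X1 X2 X3"
  shows "x * y * b =
    combz (X1 * int (\<alpha> y) + int (\<alpha> x) * int (\<beta> y)) (X2 * int (\<alpha> y) + int (\<beta> x) * int (\<beta> y))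
      (- X1 * X2 * int (\<alpha> y choose 2) - int (\<alpha> x) * int (\<beta> x) * int (\<beta> y choose 2)
       - X2 * int (\<alpha> x) * int (\<alpha> y) * int (\<beta> y) + X3 * int (\<alpha> y) + int (\<gamma> x) * int (\<beta> y)
       + X1 * int (\<beta> x) * int (\<gamma> y) - X2 * int (\<alpha> x) * int (\<gamma> y))"
  unfolding mult.assoc mult_b[of y] mult_comb[OF x] ..

lemma alpha_mult:
  assumes "x = combz X1 X2 X3"
  shows "int (\<alpha> (x * y)) = (X1 * int (\<alpha> y) + int (\<alpha> x) * int (\<beta> y)) mod int p"
  using p_pos by (simp add: alpha_def mult_mult_b[OF assms] coords_combz)

lemma beta_mult:
  assumes "x = combz X1 X2 X3"
  shows "int (\<beta> (x * y)) = (X2 * int (\<alpha> y) + int (\<beta> x) * int (\<beta> y)) mod int p"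
  using p_pos by (simp add: beta_def mult_mult_b[OF assms] coords_combz)

lemma gamma_mult:
  assumes "x = combz X1 X2 X3"
  shows "int (\<gamma> (x * y)) =
    (- X1 * X2 * int (\<alpha> y choose 2) - int (\<alpha> x) * int (\<beta> x) * int (\<beta> y choose 2)
     - X2 * int (\<alpha> x) * int (\<alpha> y) * int (\<beta> y) + X3 * int (\<alpha> y) + int (\<gamma> x) * int (\<beta> y)
     + X1 * int (\<beta> x) * int (\<gamma> y) - X2 * int (\<alpha> x) * int (\<gamma> y)) mod int p"
  using p_pos by (simp add: gamma_def mult_mult_b[OF assms] coords_combz)

lemma mult_b_eq_0_iff: "(x :: 'r) * b = 0 \<longleftrightarrow> \<alpha> x = 0 \<and> \<beta> x = 0 \<and> \<gamma> x = 0"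
proof
  assume "x * b = 0"
  then have "coords a b c p (x * b) = (0, 0, 0)"
    using coords_combz[of 0 0 0] by simp
  then show "\<alpha> x = 0 \<and> \<beta> x = 0 \<and> \<gamma> x = 0"
    by (simp add: alpha_def beta_def gamma_def)
qed (simp add: mult_b comb_def)

lemma zero_mult_b_eq_0_iff:
  "0 * b = (0 :: 'r) \<longleftrightarrow>
    int (\<alpha> 0) mod int p = 0 \<and> int (\<beta> 0) mod int p = 0 \<and> int (\<gamma> 0) mod int p = 0"
proof
  assume "int (\<alpha> 0) mod int p = 0 \<and> int (\<beta> 0) mod int p = 0 \<and> int (\<gamma> 0) mod int p = 0"
  then have "combz (int (\<alpha> 0)) (int (\<beta> 0)) (int (\<gamma> 0)) = combz 0 0 0"
    by (intro combz_cong) simp_all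
  then show "0 * b = (0 :: 'r)"
    by (simp add: mult_b comb_eq_combz)
qed (simp add: mult_b_eq_0_iff)

lemma zero_symmetric_iff: "(\<forall>x :: 'r. 0 * x = 0) \<longleftrightarrow> 0 * b = (0 :: 'r)"
proof
  assume "0 * b = (0 :: 'r)"
  then have zero: "\<alpha> 0 = 0" "\<beta> 0 = 0" "\<gamma> 0 = 0"
    by (simp_all add: mult_b_eq_0_iff)
  show "\<forall>x :: 'r. 0 * x = 0"
  proof
    fix y :: 'r
    obtain y1 y2 y3 where "y = comb a b c y1 y2 y3"
      using obtain_comb .
    then show "0 * y = 0"
      using mult_comb[OF combz_0[symmetric], of y1 y2 y3] by (simp add: zero)
  qed
qed simp

end

theorem lemma5:
  fixes p :: nat and a b c :: "'r::{group_add, monoid_mult}"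
  assumes "prime p" and "odd p"
    and left_distrib: "\<And>x y z :: 'r. x * (y + z) = x * y + x * z"
    and "nsm a p = 0" and "nsm b p = 0" and "nsm c p = 0"
    and "a + b = b + a + c" and "a + c = c + a" and "b + c = c + b"
    and unique_repr: "\<And>x :: 'r. \<exists>!t. is_coords a b c p x t"
    and a_identity: "a = 1"
  shows
   "(\<forall>x1<p. \<forall>x2<p. \<forall>x3<p. \<forall>y1<p. \<forall>y2<p. \<forall>y3<p.
      let x = comb a b c x1 x2 x3; y = comb a b c y1 y2 y3;
          X1 = int x1; X2 = int x2; X3 = int x3; Y1 = int y1; Y2 = int y2; Y3 = int y3;
          A = int (alpha a b c p x); B = int (beta a b c p x); G = int (gamma a b c p x)
      in x * y = zsm a (X1 * Y1 + A * Y2) + zsm b (X2 * Y1 + B * Y2)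
                 + zsm c (- X1 * X2 * int (y1 choose 2) - A * B * int (y2 choose 2)
                          - X2 * A * Y1 * Y2 + X3 * Y1 + G * Y2 + X1 * B * Y3 - X2 * A * Y3))
    \<and> ((int (alpha a b c p 0) mod int p = 0 \<and> int (beta a b c p 0) mod int p = 0
         \<and> int (gamma a b c p 0) mod int p = 0) \<longleftrightarrow> (\<forall>x :: 'r. 0 * x = 0))
    \<and> (\<forall>x1<p. \<forall>x2<p. \<forall>x3<p. \<forall>y :: 'r.
      let x = comb a b c x1 x2 x3;
          X1 = int x1; X2 = int x2; X3 = int x3;
          A = int (alpha a b c p x); B = int (beta a b c p x); G = int (gamma a b c p x);
          Ay = int (alpha a b c p y); By = int (beta a b c p y); Gy = int (gamma a b c p y)
      in int (alpha a b c p (x * y)) mod int p = (X1 * Ay + A * By) mod int p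
       \<and> int (beta a b c p (x * y)) mod int p = (X2 * Ay + B * By) mod int p
       \<and> int (gamma a b c p (x * y)) mod int p =
           (- X1 * X2 * int (alpha a b c p y choose 2) - A * B * int (beta a b c p y choose 2)
            - X2 * A * Ay * By + X3 * Ay + G * By + X1 * B * Gy - X2 * A * Gy) mod int p)"
proof -
  interpret heisenberg_nearring a b c p
    by unfold_locales (use assms prime_gt_0_nat in auto)
  show ?thesis
    unfolding Let_def zero_symmetric_iff zero_mult_b_eq_0_iff
    using mult_comb[OF comb_eq_combz] alpha_mult[OF comb_eq_combz] beta_mult[OF comb_eq_combz]
      gamma_mult[OF comb_eq_combz]
    by (simp add: combz_def)
qed

end
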